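(* Let $n\ge1$, let $x_1,\dots,x_n$ be nonzero real numbers and $a_1,\dots,a_n>0$. Put $P=\sum_{j=1}^n \frac{x_j^2}{a_j}$, $Q=\sum_{j=1}^n a_j$, $$A=\frac{1}{8}\sqrt{PQ}\cdot \sum_{i=1}^n \left(\frac{x_i^2}{a_iP}-\frac{a_i}{Q}\right)^2,$$ $$m=\min_{1\le i\le n}\min\left\{\frac{x_i^2}{a_iP},\frac{a_i}{Q}\right\},\qquad M=\max_{1\le i\le n}\max\left\{\frac{x_i^2}{a_iP},\frac{a_i}{Q}\right\}.$$ Then $$\frac{1}{Q}\left(\frac{A^2}{M^2}+\frac{2A}{M}\sum_{i=1}^n |x_i|\right)\leq \sum_{i=1}^n\frac{x_i^2}{a_i}-\frac{(|x_1|+\dots+|x_n|)^2}{a_1+\dots+a_n}\leq \frac{1}{Q}\left(\frac{A^2}{m^2}+\frac{2A}{m}\sum_{i=1}^n |x_i|\right).$$ *)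

theory Defs
  imports Complex_Main
begin

end

theory Submission
  imports Defs
begin

(* Normalise the data to two probability vectors on {1..n}:
     p i = x_i^2 / (a_i P),   q i = a_i / Q,
   so that sqrt (p i) * sqrt (q i) = |x_i| / R with R = sqrt (P Q), and A = R/8 * sum (p i - q i)^2.
   The Cauchy-Schwarz gap factors as  P - S^2/Q = (R - S)(R + S)/Q  with S = sum |x_i|, and
   R - S = R * (1 - sum sqrt (p i q i)) is R times the squared Hellinger distance
   (1/2) sum (sqrt p_i - sqrt q_i)^2.  Termwise,
     (p - q)^2 = (sqrt p - sqrt q)^2 (sqrt p + sqrt q)^2  with  4m <= (sqrt p + sqrt q)^2 <= 4M,
   which gives A/M <= R - S <= A/m.  Since d |-> d (d + 2S) is monotone on d >= 0, the two-sided
   bound on R - S transfers to the gap. *)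

lemma sqrt_diff_sq_bounds:
  fixes p q m M :: real
  assumes "p > 0" "q > 0" "m > 0" "m \<le> min p q" "max p q \<le> M"
  shows "(p - q)\<^sup>2 / (8 * M) \<le> (sqrt p - sqrt q)\<^sup>2 / 2"
    and "(sqrt p - sqrt q)\<^sup>2 / 2 \<le> (p - q)\<^sup>2 / (8 * m)"
proof -
  have M_pos: "M > 0" using assms by auto
  have factor: "(p - q)\<^sup>2 = (sqrt p - sqrt q)\<^sup>2 * (sqrt p + sqrt q)\<^sup>2"
  proof -
    have "p - q = (sqrt p - sqrt q) * (sqrt p + sqrt q)"
      using assms by (simp add: algebra_simps)
    thus ?thesis by (simp add: power_mult_distrib[symmetric])
  qed
  have "sqrt p \<le> sqrt M" "sqrt q \<le> sqrt M" using assms by auto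
  hence "sqrt p + sqrt q \<le> 2 * sqrt M" by linarith
  hence "(sqrt p + sqrt q)\<^sup>2 \<le> (2 * sqrt M)\<^sup>2"
    using assms(1,2) by (intro power_mono) auto
  hence upper: "(sqrt p + sqrt q)\<^sup>2 \<le> 4 * M"
    using M_pos by (simp add: power_mult_distrib)
  have "sqrt m \<le> sqrt p" "sqrt m \<le> sqrt q" using assms by auto
  hence "2 * sqrt m \<le> sqrt p + sqrt q" by linarith
  hence "(2 * sqrt m)\<^sup>2 \<le> (sqrt p + sqrt q)\<^sup>2"
    using assms(3) by (intro power_mono) auto
  hence lower: "4 * m \<le> (sqrt p + sqrt q)\<^sup>2"
    using assms by (simp add: power_mult_distrib)
  have nonneg: "0 \<le> (sqrt p - sqrt q)\<^sup>2" by simp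
  show "(p - q)\<^sup>2 / (8 * M) \<le> (sqrt p - sqrt q)\<^sup>2 / 2"
    using mult_left_mono[OF upper nonneg] M_pos unfolding factor by (simp add: divide_simps)
  show "(sqrt p - sqrt q)\<^sup>2 / 2 \<le> (p - q)\<^sup>2 / (8 * m)"
    using mult_left_mono[OF lower nonneg] assms(3) unfolding factor
    by (simp add: divide_simps mult.commute mult.left_commute)
qed

lemma hellinger_affinity:
  fixes p q :: "'a \<Rightarrow> real"
  assumes "finite I" "\<And>i. i \<in> I \<Longrightarrow> p i \<ge> 0" "\<And>i. i \<in> I \<Longrightarrow> q i \<ge> 0"
    and "sum p I = 1" "sum q I = 1"
  shows "(\<Sum>i\<in>I. (sqrt (p i) - sqrt (q i))\<^sup>2 / 2) = 1 - (\<Sum>i\<in>I. sqrt (p i) * sqrt (q i))"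
proof -
  have "(\<Sum>i\<in>I. (sqrt (p i) - sqrt (q i))\<^sup>2 / 2)
      = (\<Sum>i\<in>I. p i / 2 + q i / 2 - sqrt (p i) * sqrt (q i))"
    using assms(2,3) by (intro sum.cong) (simp_all add: power2_diff)
  also have "\<dots> = sum p I / 2 + sum q I / 2 - (\<Sum>i\<in>I. sqrt (p i) * sqrt (q i))"
    by (simp add: sum.distrib sum_subtractf sum_divide_distrib)
  finally show ?thesis using assms(4,5) by simp
qed

lemma affinity_deficit_bounds:
  fixes p q :: "'a \<Rightarrow> real" and m M :: real
  assumes "finite I" "\<And>i. i \<in> I \<Longrightarrow> p i > 0" "\<And>i. i \<in> I \<Longrightarrow> q i > 0"
    and "sum p I = 1" "sum q I = 1" "m > 0"
    and "\<And>i. i \<in> I \<Longrightarrow> m \<le> min (p i) (q i)" "\<And>i. i \<in> I \<Longrightarrow> max (p i) (q i) \<le> M"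
  shows "(\<Sum>i\<in>I. (p i - q i)\<^sup>2) / (8 * M) \<le> 1 - (\<Sum>i\<in>I. sqrt (p i) * sqrt (q i))"
    and "1 - (\<Sum>i\<in>I. sqrt (p i) * sqrt (q i)) \<le> (\<Sum>i\<in>I. (p i - q i)\<^sup>2) / (8 * m)"
proof -
  have hellinger: "1 - (\<Sum>i\<in>I. sqrt (p i) * sqrt (q i)) = (\<Sum>i\<in>I. (sqrt (p i) - sqrt (q i))\<^sup>2 / 2)"
    using hellinger_affinity[of I p q] assms(1-5) by (simp add: less_imp_le)
  show "(\<Sum>i\<in>I. (p i - q i)\<^sup>2) / (8 * M) \<le> 1 - (\<Sum>i\<in>I. sqrt (p i) * sqrt (q i))"
    unfolding hellinger sum_divide_distrib
    using sqrt_diff_sq_bounds(1) assms(2,3,6-8) by (intro sum_mono) blast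
  show "1 - (\<Sum>i\<in>I. sqrt (p i) * sqrt (q i)) \<le> (\<Sum>i\<in>I. (p i - q i)\<^sup>2) / (8 * m)"
    unfolding hellinger sum_divide_distrib
    using sqrt_diff_sq_bounds(2) assms(2,3,6-8) by (intro sum_mono) blast
qed

lemma normalised_weights:
  fixes x a :: "'a \<Rightarrow> real" and P Q :: real
  assumes "finite I" "I \<noteq> {}" "\<And>i. i \<in> I \<Longrightarrow> x i \<noteq> 0" "\<And>i. i \<in> I \<Longrightarrow> a i > 0"
    and "P = (\<Sum>i\<in>I. (x i)\<^sup>2 / a i)" "Q = (\<Sum>i\<in>I. a i)"
  shows "P > 0" "Q > 0"
    and "\<And>i. i \<in> I \<Longrightarrow> (x i)\<^sup>2 / (a i * P) > 0" "\<And>i. i \<in> I \<Longrightarrow> a i / Q > 0"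
    and "(\<Sum>i\<in>I. (x i)\<^sup>2 / (a i * P)) = 1" "(\<Sum>i\<in>I. a i / Q) = 1"
    and "(\<Sum>i\<in>I. sqrt ((x i)\<^sup>2 / (a i * P)) * sqrt (a i / Q)) = (\<Sum>i\<in>I. \<bar>x i\<bar>) / sqrt (P * Q)"
proof -
  show P_pos: "P > 0" unfolding assms(5) using assms(1-4) by (intro sum_pos) auto
  show Q_pos: "Q > 0" unfolding assms(6) using assms(1,2,4) by (intro sum_pos) auto
  show "\<And>i. i \<in> I \<Longrightarrow> (x i)\<^sup>2 / (a i * P) > 0" "\<And>i. i \<in> I \<Longrightarrow> a i / Q > 0"
    using assms(3,4) P_pos Q_pos by auto
  show "(\<Sum>i\<in>I. (x i)\<^sup>2 / (a i * P)) = 1"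
    using P_pos by (simp add: assms(5) sum_divide_distrib[symmetric] flip: divide_divide_eq_left)
  show "(\<Sum>i\<in>I. a i / Q) = 1"
    using Q_pos by (simp add: assms(6) sum_divide_distrib[symmetric])
  have "sqrt ((x i)\<^sup>2 / (a i * P)) * sqrt (a i / Q) = \<bar>x i\<bar> / sqrt (P * Q)" if "i \<in> I" for i
  proof -
    have "(x i)\<^sup>2 / (a i * P) * (a i / Q) = (x i)\<^sup>2 / (P * Q)"
      using assms(4)[OF that] by simp
    hence "sqrt ((x i)\<^sup>2 / (a i * P)) * sqrt (a i / Q) = sqrt ((x i)\<^sup>2 / (P * Q))"
      by (simp only: real_sqrt_mult[symmetric])
    thus ?thesis by (simp add: real_sqrt_divide)
  qed
  thus "(\<Sum>i\<in>I. sqrt ((x i)\<^sup>2 / (a i * P)) * sqrt (a i / Q)) = (\<Sum>i\<in>I. \<bar>x i\<bar>) / sqrt (P * Q)"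
    by (simp add: sum_divide_distrib)
qed

lemma Min_min_image_bounds:
  fixes f g :: "'a \<Rightarrow> real"
  assumes "finite I" "I \<noteq> {}" "\<And>i. i \<in> I \<Longrightarrow> f i > 0" "\<And>i. i \<in> I \<Longrightarrow> g i > 0"
  shows "Min ((\<lambda>i. min (f i) (g i)) ` I) > 0"
    and "\<And>i. i \<in> I \<Longrightarrow> Min ((\<lambda>i. min (f i) (g i)) ` I) \<le> min (f i) (g i)"
proof -
  have "Min ((\<lambda>i. min (f i) (g i)) ` I) \<in> (\<lambda>i. min (f i) (g i)) ` I"
    using assms(1,2) by (intro Min_in) auto
  thus "Min ((\<lambda>i. min (f i) (g i)) ` I) > 0" using assms(3,4) by auto
  show "\<And>i. i \<in> I \<Longrightarrow> Min ((\<lambda>i. min (f i) (g i)) ` I) \<le> min (f i) (g i)"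
    using assms(1) by (intro Min_le) auto
qed

text \<open>The Cauchy-Schwarz gap factors as (R - S)(R + S)/Q with R = sqrt (P Q); since
  d \<mapsto> d (d + 2S) is monotone on d \<ge> 0, bounds on R - S transfer to the gap.\<close>
lemma gap_bounds_from_root_gap:
  fixes P Q S lo hi :: real
  assumes "P > 0" "Q > 0" "S \<ge> 0"
    and "0 \<le> lo" "lo \<le> sqrt (P * Q) - S" "sqrt (P * Q) - S \<le> hi"
  shows "1 / Q * (lo\<^sup>2 + 2 * lo * S) \<le> P - S\<^sup>2 / Q"
    and "P - S\<^sup>2 / Q \<le> 1 / Q * (hi\<^sup>2 + 2 * hi * S)"
proof -
  define d where "d = sqrt (P * Q) - S"
  have gap: "P - S\<^sup>2 / Q = 1 / Q * (d * (d + 2 * S))"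
    using assms(1,2) by (simp add: d_def field_simps power2_eq_square)
  have square_shift: "t\<^sup>2 + 2 * t * S = t * (t + 2 * S)" for t
    by (simp add: power2_eq_square algebra_simps)
  have "lo * (lo + 2 * S) \<le> d * (d + 2 * S)"
    using assms(3-5) by (intro mult_mono) (auto simp: d_def)
  thus "1 / Q * (lo\<^sup>2 + 2 * lo * S) \<le> P - S\<^sup>2 / Q"
    unfolding gap square_shift using assms(2) by (intro mult_left_mono) auto
  have "d * (d + 2 * S) \<le> hi * (hi + 2 * S)"
    using assms(3-6) by (intro mult_mono) (auto simp: d_def)
  thus "P - S\<^sup>2 / Q \<le> 1 / Q * (hi\<^sup>2 + 2 * hi * S)"
    unfolding gap square_shift using assms(2) by (intro mult_left_mono) auto
qed

theorem mainTheorem5: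
  fixes n :: nat and x a :: "nat \<Rightarrow> real" and P Q A m M :: real
  assumes "n \<ge> 1"
    and "\<And>j. j \<in> {1..n} \<Longrightarrow> x j \<noteq> 0"
    and "\<And>j. j \<in> {1..n} \<Longrightarrow> a j > 0"
    and "P = (\<Sum>j=1..n. (x j)\<^sup>2 / a j)"
    and "Q = (\<Sum>j=1..n. a j)"
    and "A = 1/8 * sqrt (P * Q) * (\<Sum>i=1..n. ((x i)\<^sup>2 / (a i * P) - a i / Q)\<^sup>2)"
    and "m = Min ((\<lambda>i. min ((x i)\<^sup>2 / (a i * P)) (a i / Q)) ` {1..n})"
    and "M = Max ((\<lambda>i. max ((x i)\<^sup>2 / (a i * P)) (a i / Q)) ` {1..n})"
  shows "1 / Q * (A\<^sup>2 / M\<^sup>2 + 2 * A / M * (\<Sum>i=1..n. \<bar>x i\<bar>))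
           \<le> (\<Sum>i=1..n. (x i)\<^sup>2 / a i) - (\<Sum>i=1..n. \<bar>x i\<bar>)\<^sup>2 / (\<Sum>i=1..n. a i)
         \<and> (\<Sum>i=1..n. (x i)\<^sup>2 / a i) - (\<Sum>i=1..n. \<bar>x i\<bar>)\<^sup>2 / (\<Sum>i=1..n. a i)
           \<le> 1 / Q * (A\<^sup>2 / m\<^sup>2 + 2 * A / m * (\<Sum>i=1..n. \<bar>x i\<bar>))"
proof -
  define p where "p i = (x i)\<^sup>2 / (a i * P)" for i
  define q where "q i = a i / Q" for i
  define R where "R = sqrt (P * Q)"
  define S where "S = (\<Sum>i=1..n. \<bar>x i\<bar>)"
  have I: "finite {1..n}" "{1..n} \<noteq> {}" using assms(1) by auto
  note weights = normalised_weights[OF I assms(2,3) assms(4,5), folded p_def q_def R_def S_def]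
  have m_eq: "m = Min ((\<lambda>i. min (p i) (q i)) ` {1..n})"
    and M_eq: "M = Max ((\<lambda>i. max (p i) (q i)) ` {1..n})"
    by (simp_all add: assms(7,8) p_def q_def)
  have m_bounds: "m > 0" "\<And>i. i \<in> {1..n} \<Longrightarrow> m \<le> min (p i) (q i)"
    unfolding m_eq using Min_min_image_bounds[OF I, of p q] weights(3,4) by auto
  have M_bound: "max (p i) (q i) \<le> M" if "i \<in> {1..n}" for i
    unfolding M_eq by (rule Max_ge) (use that in auto)
  have M_pos: "M > 0" using M_bound[of 1] weights(3)[of 1] assms(1) unfolding p_def by force
  note deficit = affinity_deficit_bounds[OF I(1) weights(3-6) m_bounds M_bound]
  have R_pos: "R > 0" using weights(1,2) by (simp add: R_def)
  have root_gap: "R - S = R * (1 - S / R)" using R_pos by (simp add: algebra_simps)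
  have A_eq: "A / M = R * ((\<Sum>i=1..n. (p i - q i)\<^sup>2) / (8 * M))"
             "A / m = R * ((\<Sum>i=1..n. (p i - q i)\<^sup>2) / (8 * m))"
    by (simp_all add: assms(6) p_def q_def R_def)
  have "A / M \<le> R - S" "R - S \<le> A / m"
    unfolding A_eq root_gap
    by (rule mult_left_mono; use deficit weights(7) R_pos in simp)+
  moreover have "0 \<le> A / M"
    using A_eq(1) R_pos M_pos by (simp add: sum_nonneg)
  ultimately have "1 / Q * ((A / M)\<^sup>2 + 2 * (A / M) * S) \<le> P - S\<^sup>2 / Q"
                  "P - S\<^sup>2 / Q \<le> 1 / Q * ((A / m)\<^sup>2 + 2 * (A / m) * S)"
    using gap_bounds_from_root_gap[OF weights(1,2), of S "A / M" "A / m"]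
    by (simp_all add: R_def S_def sum_nonneg)
  thus ?thesis unfolding assms(4,5)[symmetric] S_def[symmetric] by (simp add: power_divide)
qed

end
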